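(* For every positive integer $n$ and every $r \in [\sqrt{\frac{13}{48}}, \frac{\sqrt{3}}{3})$, we have $N_n(r) \ge \lceil \frac{n}{2} \rceil$.
   Context: For a positive integer $n$, let $\mathcal{P}_n$ denote the family of all sets of $n$ points in the Euclidean plane such that the distance between any two points of the set is at most $1$. For $0 < r \le 1$, let $N_n(r)$ be the largest integer $k$ such that for every $P \in \mathcal{P}_n$ there exists a circle of radius $r$ (i.e. a closed disc of radius $r$) which covers (contains) at least $k$ points of $P$. *)

theory Defs
  imports "HOL-Analysis.Analysis"
begin

definition point_family :: "nat \<Rightarrow> (real^2) set set" where
  "point_family n = {P. finite P \<and> card P = n \<and> (\<forall>x\<in>P. \<forall>y\<in>P. dist x y \<le> 1)}"

definition N :: "nat \<Rightarrow> real \<Rightarrow> nat" where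
  "N n r = (GREATEST k. \<forall>P\<in>point_family n. \<exists>c. card (P \<inter> cball c r) \<ge> k)"

end

theory Submission
  imports Defs
begin

text \<open>
  A set of diameter at most 1 lies in a regular hexagon of width 1: the directions
  \<open>\<theta> + k\<pi>/3\<close> of its edge normals are found by the intermediate value theorem, applied to
  the alternating sum of the support function over six directions, which changes sign
  under a rotation by \<open>\<pi>/3\<close>. Cutting the hexagon along an axis through two opposite edge
  midpoints leaves two pentagons, each inside a disc of radius \<open>sqrt (13/48)\<close>. One of
  the two discs therefore contains at least half of the points.
\<close>

definition direction :: "real \<Rightarrow> real^2" where
  "direction t = vector [cos t, sin t]"

lemma inner_direction: "w \<bullet> direction t = w$1 * cos t + w$2 * sin t"
  by (simp add: direction_def inner_vec_def sum_2)

lemma inner_direction_direction: "direction s \<bullet> direction t = cos (s - t)"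
  by (subst inner_direction) (simp add: direction_def cos_diff)

lemma norm_direction [simp]: "norm (direction t) = 1"
  by (simp add: norm_eq_sqrt_inner inner_direction_direction)

lemma direction_add_pi: "direction (t + pi) = - direction t"
  by (simp add: vec_eq_iff forall_2 direction_def)

lemma direction_add_2pi: "direction (t + 2*pi) = direction t"
  by (simp add: vec_eq_iff forall_2 direction_def)

lemma direction_add_2pi_3: "direction (t + 2*pi/3) = direction (t + pi/3) - direction t"
  by (simp add: vec_eq_iff forall_2 direction_def cos_add sin_add cos_60 sin_60 cos_120 sin_120)

lemma inner_direction_add:
  "w \<bullet> direction (t + s) = cos s * (w \<bullet> direction t) + sin s * (w \<bullet> direction (t + pi/2))"
  by (simp add: inner_direction cos_add sin_add algebra_simps)

lemma norm_power2_eq_inner_direction: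
  "(norm w)\<^sup>2 = (w \<bullet> direction t)\<^sup>2 + (w \<bullet> direction (t + pi/2))\<^sup>2"
proof -
  have "(w \<bullet> direction t)\<^sup>2 + (w \<bullet> direction (t + pi/2))\<^sup>2
      = (w$1 * cos t + w$2 * sin t)\<^sup>2 + (w$2 * cos t - w$1 * sin t)\<^sup>2"
    by (simp add: inner_direction cos_add sin_add)
  also have "\<dots> = ((w$1)\<^sup>2 + (w$2)\<^sup>2) * ((cos t)\<^sup>2 + (sin t)\<^sup>2)"
    by algebra
  also have "\<dots> = (norm w)\<^sup>2"
    unfolding power2_norm_eq_inner sin_cos_squared_add
    by (simp add: inner_vec_def sum_2 power2_eq_square)
  finally show ?thesis ..
qed

lemma exists_inner_direction:
  "\<exists>q. q \<bullet> direction t = a \<and> q \<bullet> direction (t + pi/3) = b"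
proof -
  define q where "q = a *\<^sub>R direction t + ((2*b - a) / sqrt 3) *\<^sub>R direction (t + pi/2)"
  have "q \<bullet> direction t = a"
    by (simp add: q_def inner_add_left inner_direction_direction)
  moreover have "q \<bullet> direction (t + pi/3) = b"
    using inner_direction_add[of q t "pi/3"]
    by (simp add: q_def inner_add_left inner_direction_direction cos_60 sin_60 field_simps)
  ultimately show ?thesis by blast
qed

definition support_function :: "(real^2) set \<Rightarrow> real \<Rightarrow> real" where
  "support_function P t = Max ((\<lambda>p. p \<bullet> direction t) ` P)"

lemma support_function_ge:
  "finite P \<Longrightarrow> p \<in> P \<Longrightarrow> p \<bullet> direction t \<le> support_function P t"
  unfolding support_function_def by (rule Max_ge) auto

lemma support_function_add_pi_ge:
  "finite P \<Longrightarrow> p \<in> P \<Longrightarrow> - (p \<bullet> direction t) \<le> support_function P (t + pi)"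
  using support_function_ge[of P p "t + pi"] by (simp add: direction_add_pi)

lemma support_function_attained:
  assumes "finite P" "P \<noteq> {}"
  obtains p where "p \<in> P" "support_function P t = p \<bullet> direction t"
proof -
  have "Max ((\<lambda>p. p \<bullet> direction t) ` P) \<in> (\<lambda>p. p \<bullet> direction t) ` P"
    using assms by (intro Max_in) auto
  then show ?thesis
    using that unfolding support_function_def by auto
qed

lemma support_function_add_2pi: "support_function P (t + 2*pi) = support_function P t"
  by (simp add: support_function_def direction_add_2pi)

lemma support_function_width:
  assumes "finite P" "P \<noteq> {}" "\<forall>x\<in>P. \<forall>y\<in>P. dist x y \<le> d"
  shows "support_function P t + support_function P (t + pi) \<le> d"
proof -
  obtain p where p: "p \<in> P" "support_function P t = p \<bullet> direction t"
    using support_function_attained assms(1,2) by blast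
  obtain p' where p': "p' \<in> P" "support_function P (t + pi) = p' \<bullet> direction (t + pi)"
    using support_function_attained assms(1,2) by blast
  have "support_function P t + support_function P (t + pi) = (p - p') \<bullet> direction t"
    using p p' by (simp add: direction_add_pi inner_diff_left)
  also have "\<dots> \<le> norm (p - p') * norm (direction t)"
    by (rule norm_cauchy_schwarz)
  also have "\<dots> = dist p p'"
    by (simp add: dist_norm)
  also have "\<dots> \<le> d"
    using assms(3) p p' by blast
  finally show ?thesis .
qed

lemma continuous_on_Max:
  fixes f :: "'a \<Rightarrow> 'b::topological_space \<Rightarrow> 'c::linorder_topology"
  assumes "finite P" "P \<noteq> {}" "\<And>p. p \<in> P \<Longrightarrow> continuous_on S (f p)"
  shows "continuous_on S (\<lambda>t. Max ((\<lambda>p. f p t) ` P))"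
  using assms
proof (induction P rule: finite_ne_induct)
  case (singleton x)
  then show ?case by simp
next
  case (insert x F)
  then have "continuous_on S (\<lambda>t. max (f x t) (Max ((\<lambda>p. f p t) ` F)))"
    by (intro continuous_on_max) auto
  then show ?case
    using insert.hyps by (simp add: Max_insert)
qed

lemma continuous_support_function:
  assumes "finite P" "P \<noteq> {}"
  shows "continuous_on UNIV (support_function P)"
proof -
  have "continuous_on UNIV (\<lambda>t. p \<bullet> direction t)" for p
    unfolding inner_direction by (intro continuous_intros)
  then show ?thesis
    unfolding support_function_def by (rule continuous_on_Max[OF assms])
qed

lemma continuous_antiperiodic_has_zero:
  fixes f :: "real \<Rightarrow> real"
  assumes "continuous_on UNIV f" "\<And>t. f (t + a) = - f t"
  obtains t where "f t = 0"
proof -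
  have conn: "connected (range f)"
    using assms(1) by (rule connected_continuous_image) simp
  have mem: "f 0 \<in> range f" "- f 0 \<in> range f"
    using assms(2)[of 0] by (metis rangeI)+
  have "0 \<in> range f"
  proof (cases "f 0 \<le> 0")
    case True
    then show ?thesis by (intro connectedD_interval[OF conn mem]) simp_all
  next
    case False
    then show ?thesis by (intro connectedD_interval[OF conn mem(2,1)]) simp_all
  qed
  then show ?thesis
    using that by (metis rangeE)
qed

lemma continuous_on_shift:
  fixes f :: "real \<Rightarrow> real"
  assumes "continuous_on UNIV f"
  shows "continuous_on UNIV (\<lambda>t. f (t + c))"
  by (rule continuous_on_compose2[OF assms]) (auto intro: continuous_intros)

lemma exists_balanced_direction:
  assumes "finite P" "P \<noteq> {}"
  obtains \<theta> where
    "support_function P \<theta> + support_function P (\<theta> + 2*pi/3) + support_function P (\<theta> + 4*pi/3)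
   = support_function P (\<theta> + pi/3) + support_function P (\<theta> + pi) + support_function P (\<theta> + 5*pi/3)"
proof -
  let ?h = "support_function P"
  define g where "g t = ?h t + ?h (t + 2*pi/3) + ?h (t + 4*pi/3)" for t
  have g_shift: "g (t + pi/3) = ?h (t + pi/3) + ?h (t + pi) + ?h (t + 5*pi/3)" for t
  proof -
    have e: "t + pi/3 + 2*pi/3 = t + pi" "t + pi/3 + 4*pi/3 = t + 5*pi/3" by simp_all
    show ?thesis unfolding g_def e by (rule refl)
  qed
  have g_period: "g (t + 2*pi/3) = g t" for t
  proof -
    have e: "t + 2*pi/3 + 2*pi/3 = t + 4*pi/3" "t + 2*pi/3 + 4*pi/3 = t + 2*pi" by simp_all
    show ?thesis unfolding g_def e support_function_add_2pi by linarith
  qed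
  define F where "F t = g t - g (t + pi/3)" for t
  have "F (t + pi/3) = - F t" for t
  proof -
    have e: "t + pi/3 + pi/3 = t + 2*pi/3" by simp
    show ?thesis unfolding F_def e g_period by simp
  qed
  moreover have "continuous_on UNIV F"
  proof -
    have "continuous_on UNIV g"
      unfolding g_def using continuous_support_function[OF assms]
      by (intro continuous_intros continuous_on_shift)
    then show ?thesis
      unfolding F_def by (intro continuous_intros continuous_on_shift)
  qed
  ultimately obtain \<theta> where "F \<theta> = 0"
    using continuous_antiperiodic_has_zero by metis
  then show ?thesis
    using that unfolding F_def g_shift by (simp add: g_def)
qed

text \<open>The centre's offsets along the normals \<open>\<theta>, \<theta> + \<pi>/3, \<theta> + 2\<pi>/3\<close> are \<open>c0, c1, c1 - c0\<close>
  by direction_add_2pi_3; \<open>a0, \<dots>, a5\<close> are the support values at \<open>\<theta> + k\<pi>/3\<close>.\<close>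

lemma hexagon_offsets:
  fixes a0 a1 a2 a3 a4 a5 d :: real
  assumes "a0 + a3 \<le> d" "a1 + a4 \<le> d" "a2 + a5 \<le> d" "a0 + a2 + a4 = a1 + a3 + a5"
  obtains c0 c1 where "a0 - d/2 \<le> c0" "c0 \<le> d/2 - a3" "a1 - d/2 \<le> c1" "c1 \<le> d/2 - a4"
    "a2 - d/2 \<le> c1 - c0" "c1 - c0 \<le> d/2 - a5"
proof -
  define c1 where "c1 = max (a0 + a2 - d) (a1 - d/2)"
  define c0 where "c0 = max (a0 - d/2) (c1 - d/2 + a5)"
  show ?thesis
    by (rule that[of c0 c1]) (use assms in \<open>auto simp: c0_def c1_def\<close>)
qed

definition hexagon :: "real \<Rightarrow> real^2 \<Rightarrow> real \<Rightarrow> (real^2) set" where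
  "hexagon \<theta> q d = {p. \<forall>t\<in>{\<theta>, \<theta> + pi/3, \<theta> + 2*pi/3}. \<bar>(p - q) \<bullet> direction t\<bar> \<le> d/2}"

lemma abs_inner_diff_direction_le:
  assumes "finite P" "p \<in> P"
    and "support_function P t - d/2 \<le> q \<bullet> direction t"
    and "q \<bullet> direction t \<le> d/2 - support_function P (t + pi)"
  shows "\<bar>(p - q) \<bullet> direction t\<bar> \<le> d/2"
  using support_function_ge[OF assms(1,2), of t] support_function_add_pi_ge[OF assms(1,2), of t]
    assms(3,4)
  unfolding inner_diff_left abs_le_iff by linarith

lemma diameter_le_subset_hexagon:
  assumes "finite P" "P \<noteq> {}" "\<forall>x\<in>P. \<forall>y\<in>P. dist x y \<le> d"
  obtains \<theta> q where "P \<subseteq> hexagon \<theta> q d"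
proof -
  let ?h = "support_function P"
  obtain \<theta> where balanced:
    "?h \<theta> + ?h (\<theta> + 2*pi/3) + ?h (\<theta> + 4*pi/3) = ?h (\<theta> + pi/3) + ?h (\<theta> + pi) + ?h (\<theta> + 5*pi/3)"
    using exists_balanced_direction[OF assms(1,2)] by blast
  have opposite: "\<theta> + pi/3 + pi = \<theta> + 4*pi/3" "\<theta> + 2*pi/3 + pi = \<theta> + 5*pi/3"
    by simp_all
  have "?h \<theta> + ?h (\<theta> + pi) \<le> d" "?h (\<theta> + pi/3) + ?h (\<theta> + 4*pi/3) \<le> d"
    "?h (\<theta> + 2*pi/3) + ?h (\<theta> + 5*pi/3) \<le> d"
    using support_function_width[OF assms] opposite by metis+
  from hexagon_offsets[OF this balanced] obtain c0 c1 where c: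
    "?h \<theta> - d/2 \<le> c0" "c0 \<le> d/2 - ?h (\<theta> + pi)"
    "?h (\<theta> + pi/3) - d/2 \<le> c1" "c1 \<le> d/2 - ?h (\<theta> + 4*pi/3)"
    "?h (\<theta> + 2*pi/3) - d/2 \<le> c1 - c0" "c1 - c0 \<le> d/2 - ?h (\<theta> + 5*pi/3)" .
  obtain q where q: "q \<bullet> direction \<theta> = c0" "q \<bullet> direction (\<theta> + pi/3) = c1"
    using exists_inner_direction by blast
  have q2: "q \<bullet> direction (\<theta> + 2*pi/3) = c1 - c0"
    using q by (simp add: direction_add_2pi_3 inner_diff_right)
  have "P \<subseteq> hexagon \<theta> q d"
  proof
    fix p assume p: "p \<in> P"
    show "p \<in> hexagon \<theta> q d"
      unfolding hexagon_def
      using abs_inner_diff_direction_le[OF assms(1) p, of \<theta> d q]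
        abs_inner_diff_direction_le[OF assms(1) p, of "\<theta> + pi/3" d q]
        abs_inner_diff_direction_le[OF assms(1) p, of "\<theta> + 2*pi/3" d q]
        c q q2 opposite
      by simp
  qed
  then show ?thesis by (rule that)
qed

lemma hexagon_coordinates_bound:
  fixes X Y :: real
  assumes "\<bar>X\<bar> \<le> 1/2" "\<bar>X/2 + sqrt 3/2 * Y\<bar> \<le> 1/2" "\<bar>- X/2 + sqrt 3/2 * Y\<bar> \<le> 1/2"
  shows "X\<^sup>2 + (\<bar>Y\<bar> - sqrt 3/12)\<^sup>2 \<le> 13/48"
proof -
  define a where "a = \<bar>X\<bar>"
  define T where "T = sqrt 3 * \<bar>Y\<bar>"
  have "T \<ge> 0" "a \<ge> 0" "a \<le> 1/2"
    using assms(1) by (simp_all add: T_def a_def)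
  have "T + a \<le> 1"
    using assms(2,3) by (auto simp: T_def a_def abs_if split: if_splits)
  have "X\<^sup>2 + (\<bar>Y\<bar> - sqrt 3/12)\<^sup>2 = a\<^sup>2 + T\<^sup>2/3 - T/6 + 1/48"
    by (simp add: T_def a_def power2_eq_square algebra_simps)
  also have "\<dots> \<le> 13/48"
  proof -
    have "16*T\<^sup>2 - 8*T \<le> T * (8 - 16*a)"
      using mult_left_mono[OF \<open>T + a \<le> 1\<close> \<open>T \<ge> 0\<close>] by (simp add: power2_eq_square algebra_simps)
    also have "\<dots> \<le> (1 - a) * (8 - 16*a)"
      using \<open>T + a \<le> 1\<close> \<open>a \<le> 1/2\<close> by (intro mult_right_mono) auto
    also have "\<dots> \<le> 12 - 48*a\<^sup>2"
      using mult_nonneg_nonpos[of "8*a + 1" "2*a - 1"] \<open>a \<ge> 0\<close> \<open>a \<le> 1/2\<close>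
      by (simp add: power2_eq_square algebra_simps)
    finally show ?thesis by simp
  qed
  finally show ?thesis .
qed

lemma hexagon_subset_two_cballs:
  fixes \<theta> :: real and q :: "real^2"
  defines "v \<equiv> direction (\<theta> + pi/2)"
  shows "hexagon \<theta> q 1
    \<subseteq> cball (q + (sqrt 3/12) *\<^sub>R v) (sqrt (13/48)) \<union> cball (q - (sqrt 3/12) *\<^sub>R v) (sqrt (13/48))"
proof
  fix p assume "p \<in> hexagon \<theta> q 1"
  then have strips: "\<bar>(p - q) \<bullet> direction \<theta>\<bar> \<le> 1/2" "\<bar>(p - q) \<bullet> direction (\<theta> + pi/3)\<bar> \<le> 1/2"
    "\<bar>(p - q) \<bullet> direction (\<theta> + 2*pi/3)\<bar> \<le> 1/2"
    by (simp_all add: hexagon_def)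
  define X where "X = (p - q) \<bullet> direction \<theta>"
  define Y where "Y = (p - q) \<bullet> v"
  have "(p - q) \<bullet> direction (\<theta> + pi/3) = X/2 + sqrt 3/2 * Y"
    using inner_direction_add[of "p - q" \<theta> "pi/3"] by (simp add: cos_60 sin_60 X_def Y_def v_def)
  moreover have "(p - q) \<bullet> direction (\<theta> + 2*pi/3) = - X/2 + sqrt 3/2 * Y"
    using inner_direction_add[of "p - q" \<theta> "2*pi/3"] by (simp add: cos_120 sin_120 X_def Y_def v_def)
  ultimately have bound: "X\<^sup>2 + (\<bar>Y\<bar> - sqrt 3/12)\<^sup>2 \<le> 13/48"
    using strips by (intro hexagon_coordinates_bound) (simp_all add: X_def)
  have dist_center: "(dist p (q + s *\<^sub>R v))\<^sup>2 = X\<^sup>2 + (Y - s)\<^sup>2" for s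
  proof -
    have "(dist p (q + s *\<^sub>R v))\<^sup>2 = ((p - q - s *\<^sub>R v) \<bullet> direction \<theta>)\<^sup>2 + ((p - q - s *\<^sub>R v) \<bullet> v)\<^sup>2"
      unfolding dist_norm v_def by (simp add: norm_power2_eq_inner_direction diff_diff_eq)
    also have "\<dots> = X\<^sup>2 + (Y - s)\<^sup>2"
      by (simp add: X_def Y_def v_def inner_diff_left inner_direction_direction)
    finally show ?thesis .
  qed
  show "p \<in> cball (q + (sqrt 3/12) *\<^sub>R v) (sqrt (13/48)) \<union> cball (q - (sqrt 3/12) *\<^sub>R v) (sqrt (13/48))"
  proof (cases "Y \<ge> 0")
    case True
    then have "(dist p (q + (sqrt 3/12) *\<^sub>R v))\<^sup>2 \<le> 13/48"
      using bound dist_center by simp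
    then show ?thesis
      by (simp add: dist_commute real_le_rsqrt)
  next
    case False
    then have "(dist p (q - (sqrt 3/12) *\<^sub>R v))\<^sup>2 = X\<^sup>2 + (\<bar>Y\<bar> - sqrt 3/12)\<^sup>2"
      using dist_center[of "- (sqrt 3/12)"] by (simp add: power2_eq_square algebra_simps)
    then show ?thesis
      using bound
      by (simp add: dist_commute real_le_rsqrt)
  qed
qed

lemma diameter_le_1_subset_two_cballs:
  fixes P :: "(real^2) set"
  assumes "finite P" "\<forall>x\<in>P. \<forall>y\<in>P. dist x y \<le> 1"
  obtains c1 c2 where "P \<subseteq> cball c1 (sqrt (13/48)) \<union> cball c2 (sqrt (13/48))"
proof (cases "P = {}")
  case False
  then obtain \<theta> q where "P \<subseteq> hexagon \<theta> q 1"
    using diameter_le_subset_hexagon assms by metis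
  then show ?thesis
    using hexagon_subset_two_cballs that by blast
qed (use that in blast)

lemma half_card_le_card_Int:
  assumes "finite P" "P \<subseteq> A \<union> B"
  shows "nat \<lceil>real (card P) / 2\<rceil> \<le> card (P \<inter> A) \<or> nat \<lceil>real (card P) / 2\<rceil> \<le> card (P \<inter> B)"
proof -
  have "P = (P \<inter> A) \<union> (P \<inter> B)"
    using assms(2) by blast
  then have "card P \<le> card (P \<inter> A) + card (P \<inter> B)"
    by (metis card_Un_le)
  then have "real (card P) \<le> real (card (P \<inter> A)) + real (card (P \<inter> B))"
    by (metis of_nat_add of_nat_le_iff)
  then show ?thesis
    by (simp add: nat_le_iff ceiling_le_iff) linarith
qed

lemma point_family_nonempty: "point_family n \<noteq> {}"
proof -
  define f where "f i = (real i / (real n + 1)) *\<^sub>R direction 0" for i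
  have dist_f: "dist (f i) (f j) = \<bar>real i - real j\<bar> / (real n + 1)" for i j
    by (simp add: f_def dist_norm flip: scaleR_diff_left diff_divide_distrib)
  have "inj_on f {..<n}"
  proof (rule inj_onI)
    fix i j assume "f i = f j"
    then have "\<bar>real i - real j\<bar> / (real n + 1) = 0"
      using dist_f[of i j] by simp
    then show "i = j" by simp
  qed
  then have "f ` {..<n} \<in> point_family n"
    by (auto simp: point_family_def card_image dist_f)
  then show ?thesis by blast
qed

lemma le_N:
  assumes "\<forall>P\<in>point_family n. \<exists>c. k \<le> card (P \<inter> cball c r)"
  shows "k \<le> N n r"
  unfolding N_def
proof (rule Greatest_le_nat[where P = "\<lambda>k. \<forall>P\<in>point_family n. \<exists>c. k \<le> card (P \<inter> cball c r)",
      OF assms])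
  obtain P where P: "P \<in> point_family n"
    using point_family_nonempty by blast
  fix k' assume "\<forall>P\<in>point_family n. \<exists>c. k' \<le> card (P \<inter> cball c r)"
  then obtain c where "k' \<le> card (P \<inter> cball c r)"
    using P by blast
  also have "\<dots> \<le> card P"
    using P by (intro card_mono) (auto simp: point_family_def)
  finally show "k' \<le> n"
    using P by (simp add: point_family_def)
qed

theorem lemma1:
  fixes n :: nat and r :: real
  assumes "n \<ge> 1"
    and "sqrt (13 / 48) \<le> r" and "r < sqrt 3 / 3"
  shows "N n r \<ge> nat \<lceil>real n / 2\<rceil>"
proof (rule le_N, intro ballI)
  fix P assume "P \<in> point_family n"
  then have P: "finite P" "card P = n" "\<forall>x\<in>P. \<forall>y\<in>P. dist x y \<le> 1"
    by (simp_all add: point_family_def)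
  obtain c1 c2 where "P \<subseteq> cball c1 (sqrt (13/48)) \<union> cball c2 (sqrt (13/48))"
    using diameter_le_1_subset_two_cballs P(1,3) by metis
  also have "\<dots> \<subseteq> cball c1 r \<union> cball c2 r"
    using subset_cball[OF assms(2)] by blast
  finally show "\<exists>c. nat \<lceil>real n / 2\<rceil> \<le> card (P \<inter> cball c r)"
    using half_card_le_card_Int[OF P(1)] P(2) by blast
qed

end
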